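(* Let $p\in\{3,4,\dots\}$, $a\ge0$, $b>0$ satisfy either ($a>0$ and $b\in[p/2-1,p/2]$) or ($a=0$ and $b\in[p/2-1,p/2)$). Let $y>0$, $N\sim\mathrm{Poisson}(y/2)$ (expectations $E[\cdot\mid y]$ are with respect to this law), and $k\in\{1,2,3\}$. (1) If $a=0$, then $$\frac{E[w_k(N)\mid y]}{E[w_{k-1}(N)\mid y]}=\frac p2+k-b-1+\frac y2+\frac{y(k-b-1)}{2}\frac{E[w_{k-1}(N)/(N+p/2)\mid y]}{E[w_{k-1}(N)\mid y]}.$$ (2) If $a>0$, then $$\frac{E[w_k(N)\mid y]}{E[w_{k-1}(N)\mid y]}=\frac p2+k-b-1+\frac y2+\frac{y(k-b-1)}{2}\frac{E[w_{k-1}(N)/(N+p/2)\mid y]}{E[w_{k-1}(N)\mid y]}+\frac y2\frac{E[\phi(N+k-1)w_{k-1}(N)/(N+p/2)\mid y]}{E[w_{k-1}(N)\mid y]}+\frac{E[\phi(N+k-1)w_{k-1}(N)\mid y]}{E[w_{k-1}(N)\mid y]}.$$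
   Context: $g_0(z)=(a+z)^{-b}$; for $n\in\mathbb{Z}^+=\{0,1,2,\dots\}$ and $k\in\{0,1,2,3\}$, $w_k(n)=\int_0^\infty\frac{g_0(z)(z/2)^{n+p/2+k-1}e^{-z/2}}{2\Gamma(n+p/2)}dz$. For $a>0$, $\phi:\mathbb{Z}^+\to(0,\infty)$ is $\phi(n)=\frac{\int_0^\infty\frac{ab}{a+z}g_0(z)(z/2)^{n+p/2-1}e^{-z/2}dz}{\int_0^\infty g_0(z)(z/2)^{n+p/2-1}e^{-z/2}dz}$. *)

theory Defs
  imports "HOL-Probability.Probability"
begin

definition g0 :: "real \<Rightarrow> real \<Rightarrow> real \<Rightarrow> real" where
  "g0 a b z = (a + z) powr (- b)"

definition w :: "real \<Rightarrow> real \<Rightarrow> nat \<Rightarrow> nat \<Rightarrow> nat \<Rightarrow> real" where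
  "w a b p k n = (LBINT z:{0<..}.
      g0 a b z * (z / 2) powr (real n + real p / 2 + real k - 1) * exp (- z / 2)
      / (2 * Gamma (real n + real p / 2)))"

definition phi :: "real \<Rightarrow> real \<Rightarrow> nat \<Rightarrow> nat \<Rightarrow> real" where
  "phi a b p n =
     (LBINT z:{0<..}. a * b / (a + z) * g0 a b z * (z / 2) powr (real n + real p / 2 - 1) * exp (- z / 2))
   / (LBINT z:{0<..}. g0 a b z * (z / 2) powr (real n + real p / 2 - 1) * exp (- z / 2))"

definition Ey :: "real \<Rightarrow> (nat \<Rightarrow> real) \<Rightarrow> real" where
  "Ey y f = measure_pmf.expectation (poisson_pmf (y / 2)) f"

end

theory Submission
  imports Defs "HOL-Real_Asymp.Real_Asymp"
begin

text \<open>Write \<open>I(t)\<close> for the integral of \<open>g0(z) (z/2)^(t-1) exp(-z/2)\<close> over \<open>z > 0\<close> and \<open>K(t)\<close>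
  for the same integral with the extra weight \<open>a b / (a + z)\<close>, so that
  \<open>w_k(n) = I(n + p/2 + k) / (2 Gamma(n + p/2))\<close> and \<open>phi(m) = K(m + p/2) / I(m + p/2)\<close>.
  Since \<open>g0' = - b g0 / (a + z)\<close>, integration by parts gives \<open>I(t + 1) = (t - b) I(t) + K(t)\<close>,
  i.e. \<open>w_k(n) = (n + p/2 + k - 1 - b + phi(n + k - 1)) w_(k-1)(n)\<close>, and \<open>Gamma(s + 1) = s Gamma(s)\<close>
  gives \<open>w_(k-1)(n + 1) = w_k(n) / (n + p/2)\<close>. For \<open>N ~ Poisson(y/2)\<close> the Poisson identity
  \<open>E[N f(N)] = (y/2) E[f(N + 1)]\<close> and these two recurrences express \<open>E[w_k(N)]\<close> through
  expectations involving \<open>w_(k-1)\<close> only; dividing by \<open>E[w_(k-1)(N)] > 0\<close> gives the formula, and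
  for \<open>a = 0\<close> the function \<open>phi\<close> vanishes. The recurrence also yields the growth bound
  \<open>w_j(n) \<le> w_j(0) (1 + j)^n\<close>, which makes all Poisson expectations finite.\<close>

lemma integrable_Gamma_integrand:
  assumes "x > (0::real)"
  shows "integrable lborel (\<lambda>t. indicator {0<..} t * (t powr (x - 1) / exp t))"
proof (rule integrableI_nonneg)
  show "(\<lambda>t. indicator {0<..} t * (t powr (x - 1) / exp t)) \<in> borel_measurable lborel"
    by measurable
  show "AE t in lborel. 0 \<le> indicator {0<..} t * (t powr (x - 1) / exp t)"
    by auto
  have "(\<integral>\<^sup>+t. ennreal (indicator {0<..} t * (t powr (x - 1) / exp t)) \<partial>lborel)
       \<le> (\<integral>\<^sup>+t. ennreal (indicator {0..} t * t powr (x - 1) / exp t) \<partial>lborel)"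
    by (intro nn_integral_mono) (auto simp: indicator_def)
  also have "\<dots> = Gamma x"
    using Gamma_conv_nn_integral_real[OF assms] by simp
  finally show "(\<integral>\<^sup>+t. ennreal (indicator {0<..} t * (t powr (x - 1) / exp t)) \<partial>lborel) < \<infinity>"
    by (simp add: le_less_trans)
qed

lemma set_integrable_Gamma_integrand_half:
  assumes "x > (0::real)"
  shows "set_integrable lborel {0<..} (\<lambda>z. (z / 2) powr (x - 1) * exp (- z / 2))"
proof -
  have "integrable lborel (\<lambda>z. indicator {0<..} (0 + (1/2) * z)
          * ((0 + (1/2) * z) powr (x - 1) / exp (0 + (1/2) * z)))"
    by (rule lborel_integrable_real_affine[OF integrable_Gamma_integrand[OF assms]]) simp
  moreover have "(\<lambda>z. indicator {0<..} (0 + (1/2) * z)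
          * ((0 + (1/2) * z) powr (x - 1) / exp (0 + (1/2) * z)))
     = (\<lambda>z. indicator {0<..} z *\<^sub>R ((z / 2) powr (x - 1) * exp (- z / 2)))"
    by (auto simp: indicator_def exp_minus field_simps fun_eq_iff)
  ultimately show ?thesis
    unfolding set_integrable_def by simp
qed

definition g0_moment :: "real \<Rightarrow> real \<Rightarrow> real \<Rightarrow> real" where
  "g0_moment a b t = (LBINT z:{0<..}. g0 a b z * (z / 2) powr (t - 1) * exp (- z / 2))"

definition phi_numerator :: "real \<Rightarrow> real \<Rightarrow> real \<Rightarrow> real" where
  "phi_numerator a b t =
     (LBINT z:{0<..}. a * b / (a + z) * g0 a b z * (z / 2) powr (t - 1) * exp (- z / 2))"

lemma w_eq_g0_moment:
  "w a b p k n = g0_moment a b (real n + real p / 2 + real k) / (2 * Gamma (real n + real p / 2))"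
  unfolding w_def g0_moment_def by simp

lemma phi_eq_phi_numerator:
  "phi a b p m = phi_numerator a b (real m + real p / 2) / g0_moment a b (real m + real p / 2)"
  unfolding phi_def phi_numerator_def g0_moment_def by simp

lemma g0_nonneg: "g0 a b z \<ge> 0"
  unfolding g0_def by simp

lemma phi_weight_bounds:
  fixes a b z :: real
  assumes "a \<ge> 0" "b > 0" "z > 0"
  shows "0 \<le> a * b / (a + z)" "a * b / (a + z) \<le> b"
proof -
  have "a + z > 0"
    using assms by simp
  then show "0 \<le> a * b / (a + z)" "a * b / (a + z) \<le> b"
    using assms by (simp_all add: divide_le_eq)
qed

text \<open>Near \<open>z = 0\<close> the integrand behaves like \<open>z powr (t - 1)\<close> if \<open>a > 0\<close> but like
  \<open>z powr (t - b - 1)\<close> if \<open>a = 0\<close>; hence the condition \<open>a > 0 \<or> t > b\<close>.\<close>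

lemma set_integrable_g0_moment:
  assumes "a \<ge> 0" "b > 0" "t > 0" "a > 0 \<or> t > b"
  shows "set_integrable lborel {0<..} (\<lambda>z. g0 a b z * (z / 2) powr (t - 1) * exp (- z / 2))"
proof (cases "a > 0")
  case True
  show ?thesis
  proof (rule set_integrable_bound[OF set_integrable_mult_right
        [OF set_integrable_Gamma_integrand_half[OF \<open>t > 0\<close>], of "a powr (-b)"]])
    show "set_borel_measurable lborel {0<..} (\<lambda>z. g0 a b z * (z / 2) powr (t - 1) * exp (- z / 2))"
      unfolding set_borel_measurable_def g0_def by measurable
    have "norm (g0 a b z * (z / 2) powr (t - 1) * exp (- z / 2))
        \<le> norm (a powr - b * ((z / 2) powr (t - 1) * exp (- z / 2)))" if "z > 0" for z
    proof -
      have "g0 a b z \<le> a powr - b"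
        unfolding g0_def using True \<open>z > 0\<close> \<open>b > 0\<close> by (intro powr_mono2') auto
      then show ?thesis
        using g0_nonneg[of a b z] by (simp add: abs_mult mult.assoc mult_right_mono)
    qed
    then show "AE z in lborel. z \<in> {0<..} \<longrightarrow> norm (g0 a b z * (z / 2) powr (t - 1) * exp (- z / 2))
        \<le> norm (a powr - b * ((z / 2) powr (t - 1) * exp (- z / 2)))"
      by auto
  qed
next
  case False
  with assms have "a = 0" "t > b" by auto
  have eq: "g0 a b z * (z / 2) powr (t - 1) * exp (- z / 2)
      = 2 powr (-b) * ((z / 2) powr ((t - b) - 1) * exp (- z / 2))" if "z \<in> {0<..}" for z
  proof -
    have "z > 0"
      using that by simp
    have "z powr (-b) = 2 powr (-b) * (z / 2) powr (-b)"
      using powr_mult[of 2 "z / 2" "-b"] \<open>z > 0\<close> by simp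
    then show ?thesis
      using \<open>a = 0\<close> \<open>z > 0\<close> unfolding g0_def by (simp add: powr_add[symmetric] algebra_simps)
  qed
  have "set_integrable lborel {0<..} (\<lambda>z. 2 powr (-b) * ((z / 2) powr ((t - b) - 1) * exp (- z / 2)))"
    using set_integrable_Gamma_integrand_half[of "t - b"] \<open>t > b\<close> by (intro set_integrable_mult_right) auto
  then show ?thesis
    by (subst set_integrable_cong[OF refl refl eq])
qed

lemma set_integrable_phi_numerator:
  assumes "a \<ge> 0" "b > 0" "t > 0" "a > 0 \<or> t > b"
  shows "set_integrable lborel {0<..}
           (\<lambda>z. a * b / (a + z) * g0 a b z * (z / 2) powr (t - 1) * exp (- z / 2))"
proof (rule set_integrable_bound[OF set_integrable_mult_right[OF set_integrable_g0_moment[OF assms], of b]])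
  show "set_borel_measurable lborel {0<..}
          (\<lambda>z. a * b / (a + z) * g0 a b z * (z / 2) powr (t - 1) * exp (- z / 2))"
    unfolding set_borel_measurable_def g0_def by measurable
  have "norm (a * b / (a + z) * g0 a b z * (z / 2) powr (t - 1) * exp (- z / 2))
        \<le> norm (b * (g0 a b z * (z / 2) powr (t - 1) * exp (- z / 2)))" if "z > 0" for z
  proof -
    define X where "X = g0 a b z * (z / 2) powr (t - 1) * exp (- z / 2)"
    have "X \<ge> 0"
      unfolding X_def by (simp add: g0_nonneg)
    with phi_weight_bounds[OF \<open>a \<ge> 0\<close> \<open>b > 0\<close> that]
    have "0 \<le> a * b / (a + z) * X" "a * b / (a + z) * X \<le> b * X"
      by (simp_all only: mult_nonneg_nonneg mult_right_mono)
    then show ?thesis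
      using \<open>X \<ge> 0\<close> \<open>b > 0\<close> unfolding X_def
      by (simp add: mult.assoc del: times_divide_eq_left times_divide_eq_right)
  qed
  then show "AE z in lborel. z \<in> {0<..} \<longrightarrow>
      norm (a * b / (a + z) * g0 a b z * (z / 2) powr (t - 1) * exp (- z / 2))
        \<le> norm (b * (g0 a b z * (z / 2) powr (t - 1) * exp (- z / 2)))"
    by auto
qed

lemma has_real_derivative_g0_moment_integrand:
  assumes "a \<ge> 0" "x > 0"
  shows "((\<lambda>z. g0 a b z * (z / 2) powr t * exp (- z / 2)) has_real_derivative
     ((t - b) * (g0 a b x * (x / 2) powr (t - 1) * exp (- x / 2))
       - g0 a b x * (x / 2) powr t * exp (- x / 2)
       + a * b / (a + x) * g0 a b x * (x / 2) powr (t - 1) * exp (- x / 2)) / 2) (at x)"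
proof -
  have "a + x > 0"
    using assms by simp
  have D: "((\<lambda>z. (a + z) powr (-b) * (z / 2) powr t * exp (- z / 2)) has_real_derivative
     (- b * (a + x) powr (- b - 1) * (x / 2) powr t * exp (- x / 2)
      + (a + x) powr (-b) * (t * (x / 2) powr (t - 1) / 2) * exp (- x / 2)
      - (a + x) powr (-b) * (x / 2) powr t * exp (- x / 2) / 2)) (at x)"
    using \<open>a + x > 0\<close> \<open>x > 0\<close> by (auto intro!: derivative_eq_intros simp: field_simps)
  have e1: "(a + x) powr (- b - 1) = (a + x) powr (-b) / (a + x)"
    using \<open>a + x > 0\<close> by (simp add: powr_diff)
  have e2: "(x / 2) powr t = (x / 2) powr (t - 1) * (x / 2)"
    using powr_add[of "x / 2" "t - 1" 1] \<open>x > 0\<close> by simp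
  have e3: "- b * (A / (a + x)) * (P * (x / 2)) * E + A * (t * P / 2) * E - A * (P * (x / 2)) * E / 2
     = ((t - b) * (A * P * E) - A * (P * (x / 2)) * E + a * b / (a + x) * A * P * E) / 2"
    for A P E :: real
    using \<open>a + x > 0\<close> by (simp add: field_simps)
  show ?thesis
    using D unfolding g0_def e1 e2 e3 .
qed

lemma g0_moment_integrand_tendsto_0:
  assumes "a \<ge> 0" "b > 0" "t > 0" "a > 0 \<or> t > b"
  shows "((\<lambda>z. g0 a b z * (z / 2) powr t * exp (- z / 2)) \<longlongrightarrow> 0) (at_right 0)"
    and "((\<lambda>z. g0 a b z * (z / 2) powr t * exp (- z / 2)) \<longlongrightarrow> 0) at_top"
proof -
  show "((\<lambda>z. g0 a b z * (z / 2) powr t * exp (- z / 2)) \<longlongrightarrow> 0) (at_right 0)"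
  proof (cases "a > 0")
    case True
    then show ?thesis
      unfolding g0_def using assms by real_asymp
  next
    case False
    with assms have "a = 0" "t > b" by auto
    then show ?thesis
      unfolding g0_def using assms by simp real_asymp
  qed
  show "((\<lambda>z. g0 a b z * (z / 2) powr t * exp (- z / 2)) \<longlongrightarrow> 0) at_top"
    unfolding g0_def using assms by real_asymp
qed

lemma g0_moment_plus_one:
  assumes "a \<ge> 0" "b > 0" "t > 0" "a > 0 \<or> t > b"
  shows "g0_moment a b (t + 1) = (t - b) * g0_moment a b t + phi_numerator a b t"
proof -
  define i1 where "i1 = (\<lambda>z. g0 a b z * (z / 2) powr (t - 1) * exp (- z / 2))"
  define i2 where "i2 = (\<lambda>z. g0 a b z * (z / 2) powr t * exp (- z / 2))"
  define h where "h = (\<lambda>z. a * b / (a + z) * g0 a b z * (z / 2) powr (t - 1) * exp (- z / 2))"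
  define f where "f = (\<lambda>z. ((t - b) * i1 z - i2 z + h z) / 2)"
  have I1: "set_integrable lborel {0<..} i1"
    unfolding i1_def by (rule set_integrable_g0_moment[OF assms])
  have I2: "set_integrable lborel {0<..} i2"
    using set_integrable_g0_moment[of a b "t + 1"] assms unfolding i2_def by auto
  have H: "set_integrable lborel {0<..} h"
    unfolding h_def by (rule set_integrable_phi_numerator[OF assms])
  have I1': "set_integrable lborel {0<..} (\<lambda>z. (t - b) * i1 z)"
    using I1 by simp
  have "(LBINT x=ereal 0..\<infinity>. f x) = 0 - 0"
  proof (rule interval_integral_FTC_integrable[where F = i2])
    fix x assume "ereal 0 < ereal x" "ereal x < \<infinity>"
    then have "x > 0" by simp
    show "(i2 has_vector_derivative f x) (at x)"
      using has_real_derivative_g0_moment_integrand[OF \<open>a \<ge> 0\<close> \<open>x > 0\<close>, of b t]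
      unfolding has_real_derivative_iff_has_vector_derivative i2_def f_def i1_def h_def
      by simp
    show "isCont f x"
      unfolding f_def i1_def i2_def h_def g0_def using \<open>x > 0\<close> \<open>a \<ge> 0\<close>
      by (auto intro!: continuous_intros)
  next
    show "set_integrable lborel (einterval (ereal 0) \<infinity>) f"
      unfolding f_def using I1' I2 H
      by (intro set_integrable_divide set_integral_add(1) set_integral_diff(1)) simp_all
    show "((i2 \<circ> real_of_ereal) \<longlongrightarrow> 0) (at_right (ereal 0))"
         "((i2 \<circ> real_of_ereal) \<longlongrightarrow> 0) (at_left \<infinity>)"
      unfolding ereal_tendsto_simps i2_def
      using g0_moment_integrand_tendsto_0[OF assms] by simp_all
  qed simp
  then have "(LBINT x:{0<..}. f x) = 0"
    by (simp add: interval_integral_Ioi)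
  moreover have "(LBINT x:{0<..}. f x)
      = ((t - b) * (LBINT x:{0<..}. i1 x) - (LBINT x:{0<..}. i2 x) + (LBINT x:{0<..}. h x)) / 2"
    unfolding f_def using I1 I1' I2 H
    by (simp add: set_integral_add(2) set_integral_diff(2) set_integral_diff(1))
  ultimately show ?thesis
    unfolding g0_moment_def phi_numerator_def i1_def i2_def h_def by simp
qed

lemma g0_moment_pos:
  assumes "a \<ge> 0" "b > 0" "t > 0" "a > 0 \<or> t > b"
  shows "g0_moment a b t > 0"
proof -
  define i where "i = (\<lambda>z. g0 a b z * (z / 2) powr (t - 1) * exp (- z / 2))"
  have int: "integrable lborel (\<lambda>x. indicator {0<..} x * i x)"
    using set_integrable_g0_moment[OF assms] unfolding i_def set_integrable_def by simp
  have pos: "i z > 0" if "z > 0" for z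
    unfolding i_def g0_def using that \<open>a \<ge> 0\<close> by simp
  have "g0_moment a b t \<ge> 0"
    unfolding g0_moment_def set_lebesgue_integral_def
    using pos[unfolded i_def] by (intro integral_nonneg_AE AE_I2) (auto simp: indicator_def less_imp_le)
  moreover have "g0_moment a b t \<noteq> 0"
  proof
    assume "g0_moment a b t = 0"
    have "(LINT x:{0<..}|lborel. indicator {0<..} x * i x) = (LINT x:{0<..}|lborel. i x)"
      by (intro set_lebesgue_integral_cong) auto
    also have "\<dots> = 0"
      using \<open>g0_moment a b t = 0\<close> unfolding g0_moment_def i_def .
    finally have "(LINT x:{0<..}|lborel. indicator {0<..} x * i x) = 0" .
    with int have "{0::real<..} \<in> null_sets lborel"
      by (intro null_if_pos_func_has_zero_int) (use pos in auto)
    then have "{0<..(1::real)} \<in> null_sets lborel"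
      by (rule null_sets_subset) auto
    then show False
      by auto
  qed
  ultimately show ?thesis
    by simp
qed

lemma phi_numerator_bounds:
  assumes "a \<ge> 0" "b > 0" "t > 0" "a > 0 \<or> t > b"
  shows "0 \<le> phi_numerator a b t" "phi_numerator a b t \<le> b * g0_moment a b t"
proof -
  show "0 \<le> phi_numerator a b t"
    unfolding phi_numerator_def set_lebesgue_integral_def g0_def
    using assms by (intro integral_nonneg_AE AE_I2) (auto simp: indicator_def)
  have "phi_numerator a b t \<le> (LBINT z:{0<..}. b * (g0 a b z * (z / 2) powr (t - 1) * exp (- z / 2)))"
    unfolding phi_numerator_def
  proof (rule set_integral_mono)
    show "set_integrable lborel {0<..} (\<lambda>z. b * (g0 a b z * (z / 2) powr (t - 1) * exp (- z / 2)))"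
      using set_integrable_g0_moment[OF assms] by simp
    fix z :: real assume "z \<in> {0<..}"
    then have "a * b / (a + z) \<le> b"
      using phi_weight_bounds[of a b z] assms by simp
    moreover have "0 \<le> g0 a b z * (z / 2) powr (t - 1) * exp (- z / 2)"
      by (simp add: g0_nonneg)
    ultimately have "a * b / (a + z) * (g0 a b z * (z / 2) powr (t - 1) * exp (- z / 2))
        \<le> b * (g0 a b z * (z / 2) powr (t - 1) * exp (- z / 2))"
      by (rule mult_right_mono)
    then show "a * b / (a + z) * g0 a b z * (z / 2) powr (t - 1) * exp (- z / 2)
        \<le> b * (g0 a b z * (z / 2) powr (t - 1) * exp (- z / 2))"
      by (simp only: mult.assoc)
  qed (rule set_integrable_phi_numerator[OF assms])
  then show "phi_numerator a b t \<le> b * g0_moment a b t"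
    unfolding g0_moment_def by simp
qed

lemma integrable_pmf_nat:
  fixes p :: "nat pmf" and f :: "nat \<Rightarrow> real"
  assumes "summable (\<lambda>n. pmf p n * \<bar>f n\<bar>)"
  shows "integrable (measure_pmf p) f"
proof -
  have "integrable (count_space UNIV) (\<lambda>n. pmf p n *\<^sub>R f n)"
    unfolding integrable_count_space_nat_iff using assms by (simp add: abs_mult)
  then show ?thesis
    unfolding measure_pmf_eq_density by (subst integrable_density) auto
qed

lemma sums_expectation_pmf_nat:
  fixes p :: "nat pmf" and f :: "nat \<Rightarrow> real"
  assumes "integrable (measure_pmf p) f"
  shows "(\<lambda>n. pmf p n * f n) sums measure_pmf.expectation p f"
proof -
  have int: "integrable (count_space UNIV) (\<lambda>n. pmf p n *\<^sub>R f n)"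
    using assms unfolding measure_pmf_eq_density by (subst (asm) integrable_density) auto
  have "measure_pmf.expectation p f = integral\<^sup>L (count_space UNIV) (\<lambda>n. pmf p n *\<^sub>R f n)"
    unfolding measure_pmf_eq_density by (subst integral_density) auto
  with sums_integral_count_space_nat[OF int] show ?thesis
    by simp
qed

lemma integrable_poisson_geometric:
  fixes f :: "nat \<Rightarrow> real"
  assumes "r > 0" and "\<And>n. \<bar>f n\<bar> \<le> M * B ^ n"
  shows "integrable (measure_pmf (poisson_pmf r)) f"
proof (rule integrable_pmf_nat)
  have "summable (\<lambda>n. (M * exp (-r)) * ((r * B) ^ n /\<^sub>R fact n))"
    by (rule summable_mult[OF summable_exp_generic])
  then show "summable (\<lambda>n. pmf (poisson_pmf r) n * \<bar>f n\<bar>)"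
  proof (rule summable_comparison_test')
    fix n :: nat
    have "r ^ n / fact n * exp (- r) * \<bar>f n\<bar> \<le> r ^ n / fact n * exp (- r) * (M * B ^ n)"
      using \<open>r > 0\<close> by (intro mult_left_mono assms(2)) auto
    also have "\<dots> = (M * exp (-r)) * ((r * B) ^ n /\<^sub>R fact n)"
      by (simp add: power_mult_distrib field_simps)
    finally show "norm (pmf (poisson_pmf r) n * \<bar>f n\<bar>) \<le> (M * exp (-r)) * ((r * B) ^ n /\<^sub>R fact n)"
      using \<open>r > 0\<close> by simp
  qed
qed

lemma expectation_poisson_mult_of_nat:
  fixes f :: "nat \<Rightarrow> real"
  assumes "r > 0" and bound: "\<And>n. \<bar>f n\<bar> \<le> M * B ^ n"
  shows "measure_pmf.expectation (poisson_pmf r) (\<lambda>n. real n * f n)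
       = r * measure_pmf.expectation (poisson_pmf r) (\<lambda>n. f (Suc n))"
proof -
  have int_mult: "integrable (measure_pmf (poisson_pmf r)) (\<lambda>n. real n * f n)"
  proof (rule integrable_poisson_geometric[OF \<open>r > 0\<close>, of _ M "2 * B"])
    fix n
    have "real n \<le> 2 ^ n"
      by (metis less_exp of_nat_le_iff of_nat_numeral of_nat_power less_imp_le)
    then have "\<bar>real n * f n\<bar> \<le> 2 ^ n * (M * B ^ n)"
      using bound[of n] by (simp add: abs_mult mult_mono)
    then show "\<bar>real n * f n\<bar> \<le> M * (2 * B) ^ n"
      by (simp add: power_mult_distrib field_simps)
  qed
  have int_Suc: "integrable (measure_pmf (poisson_pmf r)) (\<lambda>n. f (Suc n))"
  proof (rule integrable_poisson_geometric[OF \<open>r > 0\<close>, of _ "M * B" B])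
    show "\<bar>f (Suc n)\<bar> \<le> M * B * B ^ n" for n
      using bound[of "Suc n"] by (simp add: ac_simps)
  qed
  have "(\<lambda>n. pmf (poisson_pmf r) (Suc n) * (real (Suc n) * f (Suc n)))
      = (\<lambda>n. r * (pmf (poisson_pmf r) n * f (Suc n)))"
    using \<open>r > 0\<close> by (simp add: pmf_poisson fun_eq_iff field_simps del: of_nat_Suc)
  then have "(\<lambda>n. pmf (poisson_pmf r) (Suc n) * (real (Suc n) * f (Suc n)))
      sums (r * measure_pmf.expectation (poisson_pmf r) (\<lambda>n. f (Suc n)))"
    using sums_mult[OF sums_expectation_pmf_nat[OF int_Suc], of r] by simp
  then have "(\<lambda>n. pmf (poisson_pmf r) n * (real n * f n))
      sums (r * measure_pmf.expectation (poisson_pmf r) (\<lambda>n. f (Suc n)))"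
    by (subst (asm) sums_Suc_iff) simp
  with sums_expectation_pmf_nat[OF int_mult] show ?thesis
    using sums_unique2 by blast
qed

lemma expectation_poisson_pos:
  fixes f :: "nat \<Rightarrow> real"
  assumes "r > 0" "integrable (measure_pmf (poisson_pmf r)) f" "\<And>n. f n > 0"
  shows "measure_pmf.expectation (poisson_pmf r) f > 0"
proof -
  have "measure_pmf.expectation (poisson_pmf r) f \<ge> 0"
    using assms(3) by (simp add: less_imp_le)
  moreover have "\<not> (AE n in measure_pmf (poisson_pmf r). f n = 0)"
    using assms(3)[of 0] by (fastforce simp: AE_measure_pmf_iff set_pmf_poisson[OF \<open>r > 0\<close>])
  then have "measure_pmf.expectation (poisson_pmf r) f \<noteq> 0"
    using assms by (subst integral_nonneg_eq_0_iff_AE) (auto simp: less_imp_le)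
  ultimately show ?thesis
    by simp
qed

locale admissible_parameters =
  fixes a b :: real and p :: nat
  assumes a_nonneg: "a \<ge> 0" and b_pos: "b > 0" and b_le_half_p: "b \<le> real p / 2"
    and a_pos_or_b_less_half_p: "a > 0 \<or> b < real p / 2" and p_ge_2: "p \<ge> 2"
begin

lemma moment_conditions:
  assumes "t \<ge> real p / 2"
  shows "t > 0" "a > 0 \<or> t > b"
  using assms b_pos b_le_half_p a_pos_or_b_less_half_p p_ge_2 by auto

lemma Gamma_half_p_pos: "Gamma (real n + real p / 2) > 0"
  using p_ge_2 by (intro Gamma_real_pos) auto

lemma w_pos: "w a b p j n > 0"
  unfolding w_eq_g0_moment
  using g0_moment_pos[OF a_nonneg b_pos moment_conditions] Gamma_half_p_pos by simp

lemma phi_bounds: "0 \<le> phi a b p m" "phi a b p m \<le> b"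
proof -
  have "real m + real p / 2 \<ge> real p / 2"
    by simp
  note conditions = a_nonneg b_pos moment_conditions[OF this]
  show "0 \<le> phi a b p m" "phi a b p m \<le> b"
    unfolding phi_eq_phi_numerator
    using phi_numerator_bounds[OF conditions] g0_moment_pos[OF conditions]
    by (simp_all add: divide_le_eq)
qed

lemma w_recurrence:
  assumes "k \<ge> 1"
  shows "w a b p k n = (real n + real p / 2 + real k - 1 - b + phi a b p (n + k - 1)) * w a b p (k - 1) n"
proof -
  define t where "t = real n + real p / 2 + real k - 1"
  have t: "t \<ge> real p / 2"
    using assms unfolding t_def by simp
  have e: "real n + real p / 2 + real k = t + 1"
    "real n + real p / 2 + real (k - 1) = t" "real (n + k - 1) + real p / 2 = t"
    using assms unfolding t_def by (simp_all add: of_nat_diff)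
  note conditions = a_nonneg b_pos moment_conditions[OF t]
  show ?thesis
    unfolding w_eq_g0_moment phi_eq_phi_numerator e g0_moment_plus_one[OF conditions]
    using g0_moment_pos[OF conditions] Gamma_half_p_pos[of n]
    by (simp add: field_simps)
qed

lemma w_Suc: "w a b p j (Suc n) = w a b p (Suc j) n / (real n + real p / 2)"
proof -
  have "real n + real p / 2 \<notin> \<int>\<^sub>\<le>\<^sub>0"
    using p_ge_2 by (auto elim!: nonpos_Ints_cases)
  then have "Gamma (real (Suc n) + real p / 2) = (real n + real p / 2) * Gamma (real n + real p / 2)"
    using Gamma_plus1[of "real n + real p / 2"] by (simp add: add_ac)
  moreover have "real (Suc n) + real p / 2 + real j = real n + real p / 2 + real (Suc j)"
    by simp
  ultimately show ?thesis
    unfolding w_eq_g0_moment by (simp add: divide_divide_eq_left ac_simps)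
qed

lemma w_Suc_le: "w a b p j (Suc n) \<le> (1 + real j) * w a b p j n"
proof -
  have q: "real n + real p / 2 \<ge> 1"
    using p_ge_2 by simp
  have "w a b p (Suc j) n = (real n + real p / 2 + real j - b + phi a b p (n + j)) * w a b p j n"
    using w_recurrence[of "Suc j" n] by simp
  also have "\<dots> \<le> (real n + real p / 2 + real j) * w a b p j n"
    using phi_bounds(2)[of "n + j"] w_pos[of j n] by (intro mult_right_mono) auto
  also have "\<dots> \<le> ((1 + real j) * (real n + real p / 2)) * w a b p j n"
  proof (rule mult_right_mono)
    have "real j * 1 \<le> real j * (real n + real p / 2)"
      using q by (intro mult_left_mono) auto
    then show "real n + real p / 2 + real j \<le> (1 + real j) * (real n + real p / 2)"
      by (simp add: distrib_right)
  qed (use w_pos[of j n] in simp)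
  finally show ?thesis
    unfolding w_Suc using q by (simp add: pos_divide_le_eq ac_simps)
qed

lemma w_le_geometric: "w a b p j n \<le> w a b p j 0 * (1 + real j) ^ n"
proof (induction n)
  case (Suc n)
  have "w a b p j (Suc n) \<le> (1 + real j) * w a b p j n"
    by (rule w_Suc_le)
  also have "\<dots> \<le> (1 + real j) * (w a b p j 0 * (1 + real j) ^ n)"
    using Suc by (intro mult_left_mono) auto
  finally show ?case
    by (simp add: algebra_simps)
qed simp

lemma integrable_poisson_w_bounded:
  fixes f :: "nat \<Rightarrow> real"
  assumes "r > 0" "\<And>n. \<bar>f n\<bar> \<le> C * w a b p j n"
  shows "integrable (measure_pmf (poisson_pmf r)) f"
proof (rule integrable_poisson_geometric[OF \<open>r > 0\<close>, of _ "\<bar>C\<bar> * w a b p j 0" "1 + real j"])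
  fix n
  have "\<bar>f n\<bar> \<le> C * w a b p j n"
    by (rule assms(2))
  also have "\<dots> \<le> \<bar>C\<bar> * w a b p j n"
    using w_pos[of j n] by (intro mult_right_mono) auto
  also have "\<dots> \<le> \<bar>C\<bar> * (w a b p j 0 * (1 + real j) ^ n)"
    using w_le_geometric by (intro mult_left_mono) auto
  finally show "\<bar>f n\<bar> \<le> \<bar>C\<bar> * w a b p j 0 * (1 + real j) ^ n"
    by (simp add: ac_simps)
qed

lemma expectation_poisson_w:
  assumes "r > 0" "k \<ge> 1"
  defines "E \<equiv> measure_pmf.expectation (poisson_pmf r)"
  shows "E (w a b p k) = (real p / 2 + real k - 1 - b + r) * E (w a b p (k - 1))
     + r * (real k - 1 - b) * E (\<lambda>n. w a b p (k - 1) n / (real n + real p / 2))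
     + r * E (\<lambda>n. phi a b p (n + k - 1) * w a b p (k - 1) n / (real n + real p / 2))
     + E (\<lambda>n. phi a b p (n + k - 1) * w a b p (k - 1) n)"
proof -
  define W where "W = w a b p (k - 1)"
  define F where "F n = phi a b p (n + k - 1)" for n
  define q where "q n = real n + real p / 2" for n :: nat
  define c where "c = real p / 2 + real k - 1 - b"
  have q_ge_1: "q n \<ge> 1" for n
    unfolding q_def using p_ge_2 by simp
  have W_pos: "W n > 0" for n
    unfolding W_def by (rule w_pos)
  have F_bounds: "0 \<le> F n" "F n \<le> b" for n
    unfolding F_def by (simp_all add: phi_bounds)
  have w_k: "w a b p k n = real n * W n + c * W n + F n * W n" for n
    using w_recurrence[OF \<open>k \<ge> 1\<close>, of n] unfolding W_def F_def c_def by (simp add: algebra_simps)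
  have W_Suc: "W (Suc n) = W n + (real k - 1 - b) * (W n / q n) + F n * W n / q n" for n
  proof -
    have "W (Suc n) = w a b p k n / q n"
      using w_Suc[of "k - 1" n] \<open>k \<ge> 1\<close> unfolding W_def q_def by simp
    also have "\<dots> = (q n + (real k - 1 - b) + F n) * W n / q n"
      using w_recurrence[OF \<open>k \<ge> 1\<close>, of n] unfolding W_def F_def q_def by (simp add: algebra_simps)
    finally show ?thesis
      using q_ge_1[of n] by (simp add: field_simps)
  qed
  have integrable_W_bounded: "integrable (measure_pmf (poisson_pmf r)) f"
    if "\<And>n. \<bar>f n\<bar> \<le> C * W n" for f :: "nat \<Rightarrow> real" and C
    using integrable_poisson_w_bounded[OF \<open>r > 0\<close>] that unfolding W_def .
  have int_W: "integrable (measure_pmf (poisson_pmf r)) W"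
    by (rule integrable_W_bounded[of _ 1]) (simp add: less_imp_le W_pos)
  have int_W_q: "integrable (measure_pmf (poisson_pmf r)) (\<lambda>n. W n / q n)"
  proof (rule integrable_W_bounded[of _ 1])
    fix n
    have "W n / q n \<le> W n"
      using q_ge_1[of n] W_pos[of n] by (simp add: divide_le_eq mult_le_cancel_left1 less_imp_le)
    then show "\<bar>W n / q n\<bar> \<le> 1 * W n"
      using q_ge_1[of n] W_pos[of n] by simp
  qed
  have int_FW: "integrable (measure_pmf (poisson_pmf r)) (\<lambda>n. F n * W n)"
  proof (rule integrable_W_bounded[of _ b])
    show "\<bar>F n * W n\<bar> \<le> b * W n" for n
      using F_bounds[of n] W_pos[of n] by (simp add: abs_of_pos mult_right_mono)
  qed
  have int_FW_q: "integrable (measure_pmf (poisson_pmf r)) (\<lambda>n. F n * W n / q n)"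
  proof (rule integrable_W_bounded[of _ b])
    fix n
    have FW: "0 \<le> F n * W n"
      using F_bounds(1)[of n] W_pos[of n] by simp
    then have "F n * W n / q n \<le> F n * W n"
      using q_ge_1[of n] by (simp add: divide_le_eq mult_le_cancel_left1)
    also have "\<dots> \<le> b * W n"
      using F_bounds[of n] W_pos[of n] by (intro mult_right_mono) auto
    finally show "\<bar>F n * W n / q n\<bar> \<le> b * W n"
      using FW q_ge_1[of n] by simp
  qed
  have int_nW: "integrable (measure_pmf (poisson_pmf r)) (\<lambda>n. real n * W n)"
  proof (rule integrable_poisson_w_bounded[OF \<open>r > 0\<close>, of _ 1 k])
    show "\<bar>real n * W n\<bar> \<le> 1 * w a b p k n" for n
      unfolding w_k c_def using W_pos[of n] F_bounds(1)[of n] b_le_half_p \<open>k \<ge> 1\<close> by simp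
  qed
  have "E (\<lambda>n. real n * W n) = r * E (\<lambda>n. W (Suc n))"
    unfolding E_def W_def
    by (rule expectation_poisson_mult_of_nat[OF \<open>r > 0\<close>, of _ "w a b p (k - 1) 0" "1 + real (k - 1)"])
      (use w_le_geometric w_pos in \<open>simp add: less_imp_le\<close>)
  also have "\<dots> = r * (E W + (real k - 1 - b) * E (\<lambda>n. W n / q n) + E (\<lambda>n. F n * W n / q n))"
    unfolding W_Suc E_def using int_W int_W_q int_FW_q by (simp del: times_divide_eq_right)
  finally have "E (w a b p k) = r * (E W + (real k - 1 - b) * E (\<lambda>n. W n / q n) + E (\<lambda>n. F n * W n / q n))
      + c * E W + E (\<lambda>n. F n * W n)"
    unfolding w_k E_def using int_nW int_W int_FW by simp
  then show ?thesis
    unfolding W_def F_def q_def c_def by (simp add: algebra_simps)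
qed

lemma Ey_w_ratio:
  assumes "y > 0" "k \<ge> 1"
  shows "Ey y (w a b p k) / Ey y (w a b p (k - 1)) =
        real p / 2 + real k - b - 1 + y / 2
        + y * (real k - b - 1) / 2
          * (Ey y (\<lambda>n. w a b p (k - 1) n / (real n + real p / 2)) / Ey y (w a b p (k - 1)))
        + y / 2 * (Ey y (\<lambda>n. phi a b p (n + k - 1) * w a b p (k - 1) n / (real n + real p / 2))
                    / Ey y (w a b p (k - 1)))
        + Ey y (\<lambda>n. phi a b p (n + k - 1) * w a b p (k - 1) n) / Ey y (w a b p (k - 1))"
proof -
  have "y / 2 > 0"
    using assms by simp
  have "Ey y (w a b p (k - 1)) > 0"
    unfolding Ey_def using \<open>y / 2 > 0\<close> w_pos
    by (intro expectation_poisson_pos integrable_poisson_w_bounded[of _ _ 1 "k - 1"]) (auto simp: less_imp_le)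
  with expectation_poisson_w[OF \<open>y / 2 > 0\<close> \<open>k \<ge> 1\<close>] show ?thesis
    unfolding Ey_def by (simp add: field_simps)
qed

end

theorem propositionA4:
  fixes p :: nat and a b y :: real and k :: nat
  assumes hp: "p \<ge> 3"
    and hab: "(a > 0 \<and> real p / 2 - 1 \<le> b \<and> b \<le> real p / 2)
              \<or> (a = 0 \<and> real p / 2 - 1 \<le> b \<and> b < real p / 2)"
    and hb: "b > 0"
    and hy: "y > 0"
    and hk: "k \<in> {1, 2, 3}"
  shows "(a = 0 \<longrightarrow>
      Ey y (w a b p k) / Ey y (w a b p (k - 1)) =
        real p / 2 + real k - b - 1 + y / 2
        + y * (real k - b - 1) / 2
          * (Ey y (\<lambda>n. w a b p (k - 1) n / (real n + real p / 2)) / Ey y (w a b p (k - 1))))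
    \<and> (a > 0 \<longrightarrow>
      Ey y (w a b p k) / Ey y (w a b p (k - 1)) =
        real p / 2 + real k - b - 1 + y / 2
        + y * (real k - b - 1) / 2
          * (Ey y (\<lambda>n. w a b p (k - 1) n / (real n + real p / 2)) / Ey y (w a b p (k - 1)))
        + y / 2 * (Ey y (\<lambda>n. phi a b p (n + k - 1) * w a b p (k - 1) n / (real n + real p / 2))
                    / Ey y (w a b p (k - 1)))
        + Ey y (\<lambda>n. phi a b p (n + k - 1) * w a b p (k - 1) n) / Ey y (w a b p (k - 1)))"
proof -
  interpret admissible_parameters a b p
    using hab hb hp by unfold_locales auto
  have "k \<ge> 1"
    using hk by auto
  have "phi a b p = (\<lambda>_. 0)" if "a = 0"
    unfolding phi_def that by simp
  then show ?thesis
    using Ey_w_ratio[OF hy \<open>k \<ge> 1\<close>] by (auto simp: Ey_def)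
qed

end
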